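(* Let $(Y_i,X_i)$, $i=1,\dots,n$, be i.i.d. from $P^*_{Y,X}=P^*_{Y\mid X}P^*_X$ on $\{1,\dots,K\}\times\mathbb{R}^d$, where $P^*_X$ is absolutely continuous with respect to Lebesgue measure with density also denoted $P^*_X(\cdot)$. Fix $\alpha\in\mathbb{R}_+^K$ (positive entries), $\alpha_0=\sum_k\alpha(k)$. Let $\mathrm{DE}^{\psi}:\mathbb{R}^d\to\mathbb{R}_+$ be a density estimator and $\mathrm{NN}^{\phi}:\mathbb{R}^d\to\mathbb{R}_+^K$ a neural network estimator of $P^*_{Y\mid X}$, with parameters $\widehat{\psi}_n,\widehat{\phi}_n$ fitted on the data, and consider the DIP-EDL variational distribution $$q_{X_i}=\mathrm{Dir}\big(\alpha+n\,\mathrm{DE}^{\widehat\psi_n}(X_i)\,\mathrm{NN}^{\widehat\phi_n}(X_i)\big).$$ Assume the estimators are consistent: $\mathrm{DE}^{\widehat\psi_n}(X_i)\xrightarrow{p}P^*_X(X_i)$ and $\mathrm{NN}^{\widehat\phi_n}(X_i)\xrightarrow{p}P^*_{Y\mid X}(\cdot\mid X_i)$ as $n\to\infty$. Then, if $p_i\mid X_{1:n},Y_{1:n}$ is distributed according to $q_{X_i}$, we have $p_i\xrightarrow{p}P^*_{Y\mid X}(\cdot\mid X_i)$ as $n\to\infty$.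
   Context: $\mathrm{Dir}(\beta)$ is the Dirichlet distribution on the probability simplex $\Delta^{K-1}$ with concentration vector $\beta\in\mathbb{R}_+^K$; $P^*_{Y\mid X}(\cdot\mid x)\in\Delta^{K-1}$ denotes the vector of true conditional class probabilities at $x$. *)

theory Defs
  imports "HOL-Probability.Probability"
begin

(* Vectors in R^K are represented as functions nat => real, with the K
   coordinates indexed by 0..K-1 (class k+1 of the paper is index k). *)

definition vdist :: "nat \<Rightarrow> (nat \<Rightarrow> real) \<Rightarrow> (nat \<Rightarrow> real) \<Rightarrow> real" where
  "vdist K u v = sqrt (\<Sum>k<K. (u k - v k)^2)"

text \<open>Dirichlet density on the probability simplex (w.r.t. Lebesgue measure on the
  first K-1 coordinates), evaluated at a full vector q of R^K.\<close>
definition dirichlet_density :: "nat \<Rightarrow> (nat \<Rightarrow> real) \<Rightarrow> (nat \<Rightarrow> real) \<Rightarrow> real" where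
  "dirichlet_density K \<beta> q =
     (if (\<forall>k<K. 0 < q k) then
        Gamma (\<Sum>k<K. \<beta> k) / (\<Prod>k<K. Gamma (\<beta> k)) * (\<Prod>k<K. q k powr (\<beta> k - 1))
      else 0)"

definition simplex_lift :: "nat \<Rightarrow> (nat \<Rightarrow> real) \<Rightarrow> (nat \<Rightarrow> real)" where
  "simplex_lift K q' = (\<lambda>k\<in>{..<K}. if k < K - 1 then q' k else 1 - (\<Sum>j<K - 1. q' j))"

definition dirichlet :: "nat \<Rightarrow> (nat \<Rightarrow> real) \<Rightarrow> (nat \<Rightarrow> real) measure" where
  "dirichlet K \<beta> =
     distr (density (PiM {..<K - 1} (\<lambda>_. lborel))
                    (\<lambda>q'. ennreal (dirichlet_density K \<beta> (simplex_lift K q'))))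
           (PiM {..<K} (\<lambda>_. borel)) (simplex_lift K)"

definition data_sigma :: "'a measure \<Rightarrow> (nat \<Rightarrow> 'a \<Rightarrow> 'x::euclidean_space) \<Rightarrow> (nat \<Rightarrow> 'a \<Rightarrow> nat)
    \<Rightarrow> nat \<Rightarrow> 'a measure" where
  "data_sigma M X Y n =
     vimage_algebra (space M) (\<lambda>\<omega>. \<lambda>j\<in>{..<n}. (X j \<omega>, Y j \<omega>))
       (PiM {..<n} (\<lambda>_. (borel :: 'x measure) \<Otimes>\<^sub>M count_space UNIV))"

end

theory Submission
  imports Defs
begin

(* Given the data, p n is Dirichlet with parameter \<beta> = \<alpha> + s \<nu>, where s = n DE(X i) and
   \<nu> = NN(X i). Its moments E[q k ^ a] = pochhammer (\<beta> k) a / pochhammer B a, B = \<Sum>\<beta>, give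
   mean \<beta> / B and coordinate variances at most 1 / (B + 1), so by Chebyshev Dir(\<beta>) concentrates
   around its mean. The mean is close to \<eta>(X i) = P*(. | X i) when s is large and \<nu> is close to
   \<eta>(X i). Since X i has a density, f(X i) > 0 almost surely, so consistency of DE forces
   s \<rightarrow> \<infinity> in probability, while NN(X i) \<rightarrow> \<eta>(X i) by assumption. The conditional law is
   only available for fixed events, so the random centre \<eta>(X i) is rounded to a finite grid
   before the conditional bound is integrated. *)

section \<open>The Dirichlet integral\<close>

lemma Gamma_real_nonzero [simp]: "0 < x \<Longrightarrow> Gamma (x :: real) \<noteq> 0"
  using Gamma_real_pos[of x] by linarith

lemma nn_integral_Beta_scaled:
  fixes a b s :: real
  assumes a: "0 < a" and b: "0 < b" and s: "0 < s"
  shows "(\<integral>\<^sup>+y. ennreal (indicator {0<..<s} y * (y powr (a - 1) * (s - y) powr (b - 1))) \<partial>lborel)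
         = ennreal (s powr (a + b - 1) * Beta a b)"
proof -
  have "((\<lambda>t. t powr (a - 1) * (1 - t) powr (b - 1)) has_integral Beta a b) {0<..<1}"
    using has_integral_Beta_real[OF a b] by (simp add: has_integral_Icc_iff_Ioo)
  from nn_integral_has_integral_lebesgue[OF _ this]
  have unit: "(\<integral>\<^sup>+t. ennreal (indicator {0<..<1} t * (t powr (a - 1) * (1 - t) powr (b - 1))) \<partial>lborel)
      = ennreal (Beta a b)"
    by simp
  have scale: "ennreal (indicator {0<..<s} (s * t) * ((s * t) powr (a - 1) * (s - (s * t)) powr (b - 1)))
      = ennreal (s powr (a + b - 2)) * ennreal (indicator {0<..<1} t * (t powr (a - 1) * (1 - t) powr (b - 1)))"
    for t
  proof (cases "0 < t \<and> t < 1")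
    case True
    have "s - s * t = s * (1 - t)" by (simp add: algebra_simps)
    moreover have "s powr (a + b - 2) = s powr (a - 1) * s powr (b - 1)"
      by (simp add: powr_add[symmetric])
    ultimately show ?thesis using True s
      by (simp add: ennreal_mult'[symmetric] powr_mult indicator_def mult_ac)
  next
    case False
    with s have "\<not> (0 < s * t \<and> s * t < s)"
      by (metis mult_less_cancel_left_pos mult.right_neutral zero_less_mult_pos)
    with False have "indicator {0<..<s} (s * t) = (0::real)" "indicator {0<..<1} t = (0::real)"
      by (auto simp: indicator_def)
    then show ?thesis by simp
  qed
  have "(\<integral>\<^sup>+y. ennreal (indicator {0<..<s} y * (y powr (a - 1) * (s - y) powr (b - 1))) \<partial>lborel)
      = ennreal s * (\<integral>\<^sup>+t. ennreal (s powr (a + b - 2))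
          * ennreal (indicator {0<..<1} t * (t powr (a - 1) * (1 - t) powr (b - 1))) \<partial>lborel)"
    using s by (subst nn_integral_real_affine[where c = s and t = 0]) (auto simp: scale)
  also have "\<dots> = ennreal s * (ennreal (s powr (a + b - 2)) * ennreal (Beta a b))"
    by (simp add: nn_integral_cmult unit)
  also have "\<dots> = ennreal (s * s powr (a + b - 2) * Beta a b)"
    using s by (simp add: ennreal_mult'[symmetric] mult.assoc)
  also have "s * s powr (a + b - 2) = s powr (a + b - 1)"
    using s by (simp add: powr_diff power2_eq_square)
  finally show ?thesis .
qed

lemma borel_measurable_component_PiM [measurable]:
  "(\<lambda>x. x j) \<in> borel_measurable (PiM I (\<lambda>_. borel :: real measure))"
proof (cases "j \<in> I")
  case False
  then have "\<And>x. x \<in> space (PiM I (\<lambda>_. borel :: real measure)) \<Longrightarrow> x j = undefined"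
    by (auto simp: space_PiM PiE_def extensional_def)
  then show ?thesis
    by (subst measurable_cong[where g = "\<lambda>_. undefined"]) auto
qed (rule measurable_component_singleton)

definition corner_simplex :: "nat \<Rightarrow> real \<Rightarrow> (nat \<Rightarrow> real) set" where
  "corner_simplex m s = {x. (\<forall>j<m. 0 < x j) \<and> (\<Sum>j<m. x j) < s}"

(* The unnormalised Dir(b 0, ..., b m) density at (x 0, ..., x (m - 1), s - (\<Sum>j<m. x j)). *)
definition dirichlet_kernel :: "nat \<Rightarrow> (nat \<Rightarrow> real) \<Rightarrow> real \<Rightarrow> (nat \<Rightarrow> real) \<Rightarrow> ennreal" where
  "dirichlet_kernel m b s x = ennreal (indicator (corner_simplex m s) x *
     ((\<Prod>j<m. x j powr (b j - 1)) * (s - (\<Sum>j<m. x j)) powr (b m - 1)))"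

lemma borel_measurable_dirichlet_kernel [measurable]:
  "dirichlet_kernel m b s \<in> borel_measurable (PiM I (\<lambda>_. lborel))"
proof -
  have [measurable]: "Measurable.pred (PiM I (\<lambda>_. lborel)) (\<lambda>x. x \<in> corner_simplex m s)"
    unfolding corner_simplex_def by measurable
  show ?thesis unfolding dirichlet_kernel_def by measurable
qed

lemma dirichlet_kernel_Suc:
  "dirichlet_kernel (Suc m) b s (x(m := y))
     = ennreal (indicator {0<..<s} y * y powr (b m - 1)) * dirichlet_kernel m (b(m := b (Suc m))) (s - y) x"
proof -
  have sum: "(\<Sum>j<Suc m. (x(m := y)) j) = (\<Sum>j<m. x j) + y"
    by simp
  have "x(m := y) \<in> corner_simplex (Suc m) s \<longleftrightarrow> (0 < y \<and> y < s) \<and> x \<in> corner_simplex m (s - y)"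
  proof
    assume "x(m := y) \<in> corner_simplex (Suc m) s"
    then have "\<forall>j<m. 0 < x j" "0 < y" "(\<Sum>j<m. x j) + y < s"
      by (auto simp: corner_simplex_def sum less_Suc_eq)
    moreover from this have "0 \<le> (\<Sum>j<m. x j)"
      by (intro sum_nonneg) auto
    ultimately show "(0 < y \<and> y < s) \<and> x \<in> corner_simplex m (s - y)"
      by (auto simp: corner_simplex_def)
  qed (auto simp: corner_simplex_def sum less_Suc_eq)
  then show ?thesis
    unfolding dirichlet_kernel_def indicator_def sum
    by (auto simp: ennreal_mult'[symmetric] mult_ac diff_diff_eq add.commute)
qed

lemma dirichlet_integral:
  assumes "\<And>j. j \<le> m \<Longrightarrow> 0 < b j" and "0 < s"
  shows "(\<integral>\<^sup>+x. dirichlet_kernel m b s x \<partial>PiM {..<m} (\<lambda>_. lborel))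
       = ennreal (s powr ((\<Sum>j\<le>m. b j) - 1) * (\<Prod>j\<le>m. Gamma (b j)) / Gamma (\<Sum>j\<le>m. b j))"
  using assms
proof (induction m arbitrary: b s)
  case 0
  then show ?case
    by (simp add: dirichlet_kernel_def corner_simplex_def PiM_empty nn_integral_count_space_finite)
next
  case (Suc m)
  interpret product_sigma_finite "\<lambda>_. lborel :: real measure" by standard
  define b' where "b' = b(m := b (Suc m))"
  define B' where "B' = (\<Sum>j\<le>m. b' j)"
  define C where "C = (\<Prod>j\<le>m. Gamma (b' j)) / Gamma B'"
  have b': "\<And>j. j \<le> m \<Longrightarrow> 0 < b' j"
    using Suc.prems by (auto simp: b'_def)
  have B': "0 < B'"
    unfolding B'_def using b' by (intro sum_pos) auto
  have C: "0 \<le> C"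
    unfolding C_def using b' B' by (intro divide_nonneg_nonneg prod_nonneg) auto
  have inner: "ennreal (indicator {0<..<s} y * y powr (b m - 1))
        * (\<integral>\<^sup>+x. dirichlet_kernel m b' (s - y) x \<partial>PiM {..<m} (\<lambda>_. lborel))
      = ennreal (indicator {0<..<s} y * (y powr (b m - 1) * (s - y) powr (B' - 1))) * ennreal C" for y
    using Suc.IH[OF b'] C
    by (cases "0 < y \<and> y < s") (simp_all add: B'_def C_def ennreal_mult'[symmetric] mult_ac)
  have "(\<integral>\<^sup>+x. dirichlet_kernel (Suc m) b s x \<partial>PiM {..<Suc m} (\<lambda>_. lborel))
      = (\<integral>\<^sup>+y. (\<integral>\<^sup>+x. dirichlet_kernel (Suc m) b s (x(m := y)) \<partial>PiM {..<m} (\<lambda>_. lborel)) \<partial>lborel)"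
    unfolding lessThan_Suc by (rule product_nn_integral_insert_rev) auto
  also have "\<dots> = (\<integral>\<^sup>+y. ennreal (indicator {0<..<s} y * (y powr (b m - 1) * (s - y) powr (B' - 1)))
      * ennreal C \<partial>lborel)"
    unfolding dirichlet_kernel_Suc b'_def[symmetric]
    by (simp add: nn_integral_cmult inner)
  also have "\<dots> = ennreal (s powr (b m + B' - 1) * Beta (b m) B') * ennreal C"
    using Suc.prems B' by (simp add: nn_integral_multc nn_integral_Beta_scaled)
  also have "\<dots> = ennreal (s powr ((\<Sum>j\<le>Suc m. b j) - 1) * (\<Prod>j\<le>Suc m. Gamma (b j)) / Gamma (\<Sum>j\<le>Suc m. b j))"
  proof -
    have "B' = (\<Sum>j<m. b j) + b (Suc m)" "(\<Prod>j\<le>m. Gamma (b' j)) = (\<Prod>j<m. Gamma (b j)) * Gamma (b (Suc m))"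
      by (simp_all add: B'_def b'_def lessThan_Suc_atMost[symmetric])
    moreover have "0 \<le> s powr (b m + B' - 1) * Beta (b m) B'"
      using Suc.prems(1)[of m] B' by (simp add: Beta_def)
    ultimately show ?thesis
      using B' C
      by (simp add: C_def Beta_def ennreal_mult'[symmetric] lessThan_Suc_atMost[symmetric] algebra_simps)
  qed
  finally show ?case .
qed

section \<open>Moments of the Dirichlet distribution\<close>

lemma prod_fun_upd:
  fixes g :: "'a \<Rightarrow> 'b \<Rightarrow> 'c::field"
  assumes "finite A" "k \<in> A" "g k (f k) \<noteq> 0"
  shows "(\<Prod>j\<in>A. g j ((f(k := y)) j)) = (\<Prod>j\<in>A. g j (f j)) * (g k y / g k (f k))"
proof -
  have "(\<Prod>j\<in>A - {k}. g j ((f(k := y)) j)) = (\<Prod>j\<in>A - {k}. g j (f j))"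
    by (intro prod.cong) auto
  then show ?thesis
    using assms by (simp add: prod.remove[of A k])
qed

lemma sets_dirichlet [simp, measurable_cong]: "sets (dirichlet K \<beta>) = sets (PiM {..<K} (\<lambda>_. borel))"
  by (simp add: dirichlet_def)

lemma space_dirichlet: "space (dirichlet K \<beta>) = space (PiM {..<K} (\<lambda>_. borel))"
  by (simp add: dirichlet_def)

lemma measurable_simplex_lift [measurable]:
  "simplex_lift K \<in> PiM I (\<lambda>_. lborel) \<rightarrow>\<^sub>M PiM {..<K} (\<lambda>_. borel :: real measure)"
  unfolding simplex_lift_def by (intro measurable_restrict) measurable

lemma borel_measurable_dirichlet_density [measurable]:
  "(\<lambda>q. ennreal (dirichlet_density K \<beta> q)) \<in> borel_measurable (PiM {..<K} (\<lambda>_. borel))"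
  unfolding dirichlet_density_def by measurable

lemma nn_integral_dirichlet:
  assumes [measurable]: "g \<in> borel_measurable (PiM {..<K} (\<lambda>_. borel :: real measure))"
  shows "(\<integral>\<^sup>+q. g q \<partial>dirichlet K \<beta>)
       = (\<integral>\<^sup>+q'. ennreal (dirichlet_density K \<beta> (simplex_lift K q')) * g (simplex_lift K q')
            \<partial>PiM {..<K - 1} (\<lambda>_. lborel))"
  unfolding dirichlet_def by (subst nn_integral_distr) (simp_all add: nn_integral_density)

lemma AE_dirichlet_pos: "AE q in dirichlet K \<beta>. \<forall>k<K. 0 < q k"
proof -
  have "AE q' in density (PiM {..<K - 1} (\<lambda>_. lborel))
      (\<lambda>q'. ennreal (dirichlet_density K \<beta> (simplex_lift K q'))). \<forall>k<K. 0 < simplex_lift K q' k"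
    by (subst AE_density) (auto simp: dirichlet_density_def split: if_splits)
  then show ?thesis
    unfolding dirichlet_def by (subst AE_distr_iff) auto
qed

lemma dirichlet_density_mult_power:
  assumes K: "K = Suc m" and k: "k < K" and pos: "\<And>j. j < K \<Longrightarrow> 0 < \<beta> j"
  shows "ennreal (dirichlet_density K \<beta> (simplex_lift K x)) * ennreal (simplex_lift K x k ^ a)
       = ennreal (Gamma (\<Sum>j<K. \<beta> j) / (\<Prod>j<K. Gamma (\<beta> j)))
         * dirichlet_kernel m (\<beta>(k := \<beta> k + a)) 1 x"
proof -
  define l where "l = simplex_lift K x"
  define C where "C = Gamma (\<Sum>j<K. \<beta> j) / (\<Prod>j<K. Gamma (\<beta> j))"
  have l: "\<And>j. j < K \<Longrightarrow> l j = (if j < m then x j else 1 - (\<Sum>j<m. x j))"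
    by (simp add: l_def simplex_lift_def K)
  have simplex: "(\<forall>j<K. 0 < l j) \<longleftrightarrow> x \<in> corner_simplex m 1"
    by (auto simp: l corner_simplex_def K less_Suc_eq)
  have "0 < (\<Sum>j<K. \<beta> j)"
    using pos k by (intro sum_pos) auto
  then have C: "0 \<le> C"
    unfolding C_def using pos by (intro divide_nonneg_nonneg prod_nonneg) auto
  show ?thesis
  proof (cases "x \<in> corner_simplex m 1")
    case True
    then have l_pos: "\<And>j. j < K \<Longrightarrow> 0 < l j"
      using simplex by blast
    have "(\<Prod>j<K. l j powr ((\<beta>(k := \<beta> k + a)) j - 1))
        = (\<Prod>j<K. l j powr (\<beta> j - 1)) * (l k powr (\<beta> k + a - 1) / l k powr (\<beta> k - 1))"
      using k l_pos[OF k] by (intro prod_fun_upd) auto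
    also have "l k powr (\<beta> k + a - 1) / l k powr (\<beta> k - 1) = l k ^ a"
      using l_pos[OF k] by (simp add: powr_realpow[symmetric] powr_diff[symmetric])
    finally have "(\<Prod>j<K. l j powr (\<beta> j - 1)) * l k ^ a
        = (\<Prod>j<m. x j powr ((\<beta>(k := \<beta> k + a)) j - 1))
          * (1 - (\<Sum>j<m. x j)) powr ((\<beta>(k := \<beta> k + a)) m - 1)"
      by (simp add: K l)
    moreover have "0 \<le> (\<Prod>j<K. l j powr (\<beta> j - 1))" "0 \<le> l k ^ a"
      using l_pos[OF k] by (auto intro: prod_nonneg)
    ultimately show ?thesis
      using True simplex C
      by (simp add: dirichlet_density_def dirichlet_kernel_def ennreal_mult'[symmetric] mult.assoc
          flip: l_def C_def)
  next
    case False
    then show ?thesis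
      using simplex by (auto simp: dirichlet_density_def dirichlet_kernel_def simp flip: l_def)
  qed
qed

lemma dirichlet_moment:
  assumes pos: "\<And>k. k < K \<Longrightarrow> 0 < \<beta> k" and k: "k < K"
  shows "(\<integral>\<^sup>+q. ennreal (q k ^ a) \<partial>dirichlet K \<beta>)
       = ennreal (pochhammer (\<beta> k) a / pochhammer (\<Sum>j<K. \<beta> j) a)"
proof -
  obtain m where K: "K = Suc m"
    using k by (cases K) auto
  then have "K - 1 = m"
    by simp
  define B where "B = (\<Sum>j<K. \<beta> j)"
  define \<beta>' where "\<beta>' = \<beta>(k := \<beta> k + a)"
  have B: "0 < B"
    unfolding B_def using pos k by (intro sum_pos) auto
  have [simp]: "Gamma (\<beta> k) \<noteq> 0" "(\<Prod>j<K. Gamma (\<beta> j)) \<noteq> 0"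
    using pos k by auto
  have "(\<Prod>j\<le>m. Gamma (\<beta>' j)) = (\<Prod>j<K. Gamma (\<beta> j)) * (Gamma (\<beta> k + a) / Gamma (\<beta> k))"
    unfolding \<beta>'_def K lessThan_Suc_atMost using k K
    by (subst prod_fun_upd[where g = "\<lambda>_. Gamma"]) auto
  moreover have "(\<Sum>j\<le>m. \<beta>' j) = B + a"
    unfolding \<beta>'_def B_def K lessThan_Suc_atMost using k K by (simp add: sum.remove[of _ k])
  moreover have "\<And>j. j \<le> m \<Longrightarrow> 0 < \<beta>' j"
    using pos K by (auto simp: \<beta>'_def add_pos_nonneg)
  ultimately have kernel: "(\<integral>\<^sup>+x. dirichlet_kernel m \<beta>' 1 x \<partial>PiM {..<m} (\<lambda>_. lborel))
      = ennreal ((\<Prod>j<K. Gamma (\<beta> j)) * (Gamma (\<beta> k + a) / Gamma (\<beta> k)) / Gamma (B + a))"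
    by (simp add: dirichlet_integral)
  have "(\<integral>\<^sup>+q. ennreal (q k ^ a) \<partial>dirichlet K \<beta>)
      = (\<integral>\<^sup>+x. ennreal (Gamma B / (\<Prod>j<K. Gamma (\<beta> j))) * dirichlet_kernel m \<beta>' 1 x
           \<partial>PiM {..<m} (\<lambda>_. lborel))"
    using \<open>K - 1 = m\<close>
    by (simp add: nn_integral_dirichlet dirichlet_density_mult_power[OF K k pos] B_def \<beta>'_def)
  also have "\<dots> = ennreal (Gamma B / Gamma (B + a) * (Gamma (\<beta> k + a) / Gamma (\<beta> k)))"
  proof -
    have "0 < (\<Prod>j<K. Gamma (\<beta> j))"
      using pos by (intro prod_pos) auto
    with B show ?thesis
      by (simp add: nn_integral_cmult kernel ennreal_mult'[symmetric]) (simp add: field_simps)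
  qed
  also have "Gamma B / Gamma (B + a) * (Gamma (\<beta> k + a) / Gamma (\<beta> k))
      = pochhammer (\<beta> k) a / pochhammer B a"
  proof -
    have "B \<notin> \<int>\<^sub>\<le>\<^sub>0" "\<beta> k \<notin> \<int>\<^sub>\<le>\<^sub>0"
      using B pos[OF k] by auto
    then show ?thesis
      by (simp add: pochhammer_Gamma Gamma_eq_zero_iff mult_ac)
  qed
  finally show ?thesis
    by (simp add: B_def)
qed

lemma prob_space_dirichlet:
  assumes "0 < K" and "\<And>k. k < K \<Longrightarrow> 0 < \<beta> k"
  shows "prob_space (dirichlet K \<beta>)"
proof
  show "emeasure (dirichlet K \<beta>) (space (dirichlet K \<beta>)) = 1"
    using dirichlet_moment[of K \<beta> 0 0] assms by (simp add: nn_integral_const)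
qed

lemma
  assumes pos: "\<And>k. k < K \<Longrightarrow> 0 < \<beta> k" and k: "k < K"
  shows integrable_dirichlet_power: "integrable (dirichlet K \<beta>) (\<lambda>q. q k ^ a)"
    and integral_dirichlet_power:
      "(\<integral>q. q k ^ a \<partial>dirichlet K \<beta>) = pochhammer (\<beta> k) a / pochhammer (\<Sum>j<K. \<beta> j) a"
proof -
  have "0 < (\<Sum>j<K. \<beta> j)"
    using pos k by (intro sum_pos) auto
  then have nonneg: "0 \<le> pochhammer (\<beta> k) a / pochhammer (\<Sum>j<K. \<beta> j) a"
    using pos[OF k] by (simp add: pochhammer_pos less_imp_le)
  have AE: "AE q in dirichlet K \<beta>. 0 \<le> q k ^ a"
    using AE_dirichlet_pos by eventually_elim (use k in auto)
  show "integrable (dirichlet K \<beta>) (\<lambda>q. q k ^ a)"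
    using AE dirichlet_moment[OF pos k] by (intro integrableI_nonneg) auto
  show "(\<integral>q. q k ^ a \<partial>dirichlet K \<beta>) = pochhammer (\<beta> k) a / pochhammer (\<Sum>j<K. \<beta> j) a"
    using AE nonneg by (simp add: integral_eq_nn_integral dirichlet_moment[OF pos k])
qed

lemma integral_dirichlet_sq_dev:
  assumes pos: "\<And>k. k < K \<Longrightarrow> 0 < \<beta> k" and k: "k < K"
  defines "B \<equiv> \<Sum>j<K. \<beta> j"
  shows "(\<integral>q. (q k - c)\<^sup>2 \<partial>dirichlet K \<beta>)
       = \<beta> k / B * (1 - \<beta> k / B) / (B + 1) + (\<beta> k / B - c)\<^sup>2"
proof -
  interpret prob_space "dirichlet K \<beta>"
    using pos k by (intro prob_space_dirichlet) auto
  have B: "0 < B"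
    unfolding B_def using pos k by (intro sum_pos) auto
  have int: "integrable (dirichlet K \<beta>) (\<lambda>q. q k)" "integrable (dirichlet K \<beta>) (\<lambda>q. (q k)\<^sup>2)"
    using integrable_dirichlet_power[of K \<beta> k 1] integrable_dirichlet_power[of K \<beta> k 2] pos k
    by simp_all
  have "(\<integral>q. (q k - c)\<^sup>2 \<partial>dirichlet K \<beta>)
      = (\<integral>q. (q k)\<^sup>2 \<partial>dirichlet K \<beta>) - 2 * c * (\<integral>q. q k \<partial>dirichlet K \<beta>) + c\<^sup>2"
    using int by (simp add: prob_space power2_diff mult.assoc)
  also have "\<dots> = \<beta> k * (\<beta> k + 1) / (B * (B + 1)) - 2 * c * (\<beta> k / B) + c\<^sup>2"
    using integral_dirichlet_power[of K \<beta> k 1] integral_dirichlet_power[of K \<beta> k 2] pos k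
    by (simp add: B_def numeral_2_eq_2 pochhammer_Suc mult_ac)
  also have "\<dots> = \<beta> k / B * (1 - \<beta> k / B) / (B + 1) + (\<beta> k / B - c)\<^sup>2"
    using B by (simp add: divide_simps power2_eq_square) (simp add: algebra_simps)
  finally show ?thesis .
qed

lemma vdist_nonneg [simp]: "0 \<le> vdist K u v"
  by (simp add: vdist_def sum_nonneg)

lemma vdist_power2: "(vdist K u v)\<^sup>2 = (\<Sum>k<K. (u k - v k)\<^sup>2)"
  by (simp add: vdist_def sum_nonneg)

lemma vdist_commute: "vdist K u v = vdist K v u"
  unfolding vdist_def by (simp add: power2_commute)

lemma vdist_eq_L2_set: "vdist K u v = L2_set (\<lambda>k. u k - v k) {..<K}"
  by (simp add: vdist_def L2_set_def)

lemma vdist_triangle: "vdist K u w \<le> vdist K u v + vdist K v w"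
  using L2_set_triangle_ineq[of "\<lambda>k. u k - v k" "\<lambda>k. v k - w k" "{..<K}"]
  by (simp add: vdist_eq_L2_set)

lemma abs_le_vdist: "k < K \<Longrightarrow> \<bar>u k - v k\<bar> \<le> vdist K u v"
  unfolding vdist_def by (rule real_le_rsqrt) (auto intro: member_le_sum)

lemma vdist_le_sqrt_card:
  assumes "\<And>k. k < K \<Longrightarrow> \<bar>u k - v k\<bar> \<le> t" and "0 \<le> t"
  shows "vdist K u v \<le> sqrt K * t"
proof -
  have "(u k - v k)\<^sup>2 \<le> t\<^sup>2" if "k < K" for k
    using power_mono[OF assms(1)[OF that], of 2] by simp
  then have "(\<Sum>k<K. (u k - v k)\<^sup>2) \<le> (\<Sum>k<K. t\<^sup>2)"
    by (intro sum_mono) auto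
  then have "vdist K u v \<le> sqrt (K * t\<^sup>2)"
    unfolding vdist_def by simp
  then show ?thesis
    using assms(2) by (simp add: real_sqrt_mult)
qed

lemma abs_sum_minus_one_le:
  assumes "(\<Sum>k<K. \<eta> k) = 1" and "vdist K \<nu> \<eta> \<le> d"
  shows "\<bar>(\<Sum>k<K. \<nu> k) - 1\<bar> \<le> K * d"
proof -
  have "\<bar>(\<Sum>k<K. \<nu> k) - 1\<bar> = \<bar>\<Sum>k<K. \<nu> k - \<eta> k\<bar>"
    by (simp add: assms(1) sum_subtractf)
  also have "\<dots> \<le> (\<Sum>k<K. d)"
    using abs_le_vdist[of _ K \<nu> \<eta>] assms(2) by (intro order_trans[OF sum_abs] sum_mono) fastforce
  finally show ?thesis
    by simp
qed

section \<open>Concentration of Dirichlet posteriors\<close>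

lemma dirichlet_tail_bound:
  assumes pos: "\<And>k. k < K \<Longrightarrow> 0 < \<beta> k" and K: "0 < K" and r: "0 < r"
  defines "B \<equiv> \<Sum>j<K. \<beta> j"
  shows "measure (dirichlet K \<beta>) {q \<in> space (PiM {..<K} (\<lambda>_. borel)). r < vdist K q c}
       \<le> (K / (B + 1) + (vdist K (\<lambda>k. \<beta> k / B) c)\<^sup>2) / r\<^sup>2"
proof -
  interpret prob_space "dirichlet K \<beta>"
    using pos K by (intro prob_space_dirichlet) auto
  have B: "0 < B"
    unfolding B_def using pos K by (intro sum_pos) auto
  let ?u = "\<lambda>q. \<Sum>k<K. (q k - c k)\<^sup>2"
  have int_k: "integrable (dirichlet K \<beta>) (\<lambda>q. (q k - c k)\<^sup>2)" if "k < K" for k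
  proof -
    have "integrable (dirichlet K \<beta>) (\<lambda>q. q k)" "integrable (dirichlet K \<beta>) (\<lambda>q. (q k)\<^sup>2)"
      using integrable_dirichlet_power[of K \<beta> k 1] integrable_dirichlet_power[of K \<beta> k 2] pos that
      by simp_all
    then show ?thesis
      by (simp add: power2_diff)
  qed
  then have int: "integrable (dirichlet K \<beta>) ?u"
    by (intro Bochner_Integration.integrable_sum) auto
  have "r\<^sup>2 \<le> ?u q" if "r < vdist K q c" for q
  proof -
    have "r\<^sup>2 \<le> (vdist K q c)\<^sup>2"
      using that r by (intro power_mono) auto
    then show ?thesis
      by (simp add: vdist_power2)
  qed
  then have "{q \<in> space (PiM {..<K} (\<lambda>_. borel)). r < vdist K q c}
      \<subseteq> {q \<in> space (dirichlet K \<beta>). r\<^sup>2 \<le> ?u q}"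
    by (auto simp: space_dirichlet)
  then have "measure (dirichlet K \<beta>) {q \<in> space (PiM {..<K} (\<lambda>_. borel)). r < vdist K q c}
      \<le> measure (dirichlet K \<beta>) {q \<in> space (dirichlet K \<beta>). r\<^sup>2 \<le> ?u q}"
    by (rule finite_measure_mono) measurable
  also have "\<dots> \<le> (\<integral>q. ?u q \<partial>dirichlet K \<beta>) / r\<^sup>2"
    using int r by (intro integral_Markov_inequality_measure[where A = "{}"]) (simp_all add: sum_nonneg)
  also have "(\<integral>q. ?u q \<partial>dirichlet K \<beta>)
      = (\<Sum>k<K. \<beta> k / B * (1 - \<beta> k / B) / (B + 1) + (\<beta> k / B - c k)\<^sup>2)"
    using int_k pos by (simp add: Bochner_Integration.integral_sum integral_dirichlet_sq_dev B_def)
  also have "\<dots> \<le> K / (B + 1) + (vdist K (\<lambda>k. \<beta> k / B) c)\<^sup>2"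
  proof -
    have "\<beta> k / B * (1 - \<beta> k / B) \<le> 1" for k
      using sum_squares_ge_zero[of "\<beta> k / B - 1/2" 0] by (simp add: algebra_simps power2_eq_square)
    then have "(\<Sum>k<K. \<beta> k / B * (1 - \<beta> k / B) / (B + 1)) \<le> (\<Sum>k<K. 1 / (B + 1))"
      using B by (intro sum_mono divide_right_mono) auto
    then show ?thesis
      by (simp add: sum.distrib vdist_power2)
  qed
  finally show ?thesis
    using r by (simp add: divide_right_mono)
qed

lemma posterior_numerator_bound:
  fixes \<alpha> \<nu> \<eta> :: "nat \<Rightarrow> real"
  assumes k: "k < K" and \<alpha>: "\<And>k. k < K \<Longrightarrow> 0 < \<alpha> k"
    and \<eta>: "\<And>k. k < K \<Longrightarrow> 0 \<le> \<eta> k" "(\<Sum>k<K. \<eta> k) = 1"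
    and d: "vdist K \<nu> \<eta> \<le> d" and s: "0 \<le> s"
  shows "\<bar>(\<alpha> k + s * \<nu> k) - \<eta> k * (\<Sum>j<K. \<alpha> j + s * \<nu> j)\<bar>
    \<le> 2 * (\<Sum>j<K. \<alpha> j) + s * ((1 + K) * d)"
proof -
  define a0 where "a0 = (\<Sum>j<K. \<alpha> j)"
  define S where "S = (\<Sum>j<K. \<nu> j)"
  have "\<eta> k \<le> (\<Sum>j<K. \<eta> j)"
    using k \<eta>(1) by (intro member_le_sum) auto
  then have \<eta>1: "\<eta> k \<le> 1"
    using \<eta>(2) by simp
  have \<alpha>k: "\<alpha> k \<le> a0"
    unfolding a0_def using k \<alpha> by (intro member_le_sum) (auto intro: less_imp_le)
  have "0 \<le> \<eta> k * a0" "\<eta> k * a0 \<le> a0"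
    using \<eta>(1)[OF k] \<eta>1 \<alpha>[OF k] \<alpha>k by (simp_all add: mult_left_le_one_le)
  then have "\<bar>\<alpha> k - \<eta> k * a0\<bar> \<le> 2 * a0"
    unfolding abs_le_iff using \<alpha>[OF k] \<alpha>k by linarith
  moreover have "\<bar>s * (\<nu> k - \<eta> k)\<bar> \<le> s * d"
    using abs_le_vdist[OF k, of \<nu> \<eta>] d s by (simp add: abs_mult mult_left_mono)
  moreover have "\<bar>s * \<eta> k * (1 - S)\<bar> \<le> s * (K * d)"
    using \<eta>(1)[OF k] \<eta>1 abs_sum_minus_one_le[OF \<eta>(2) d] s
      mult_mono[of "\<eta> k" 1 "\<bar>1 - S\<bar>" "K * d"]
    by (simp add: S_def abs_mult abs_minus_commute mult.assoc mult_left_mono)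
  moreover have "(\<alpha> k + s * \<nu> k) - \<eta> k * (\<Sum>j<K. \<alpha> j + s * \<nu> j)
      = (\<alpha> k - \<eta> k * a0) + s * (\<nu> k - \<eta> k) + s * \<eta> k * (1 - S)"
    by (simp add: a0_def S_def sum.distrib sum_distrib_left algebra_simps)
  moreover have "s * ((1 + real K) * d) = s * d + s * (K * d)"
    by (simp add: algebra_simps)
  ultimately show ?thesis
    unfolding a0_def[symmetric]
    using abs_triangle_ineq[of "\<alpha> k - \<eta> k * a0 + s * (\<nu> k - \<eta> k)" "s * \<eta> k * (1 - S)"]
      abs_triangle_ineq[of "\<alpha> k - \<eta> k * a0" "s * (\<nu> k - \<eta> k)"]
    by linarith
qed

lemma posterior_mean_close:
  fixes \<alpha> \<nu> \<eta> :: "nat \<Rightarrow> real"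
  assumes \<alpha>: "\<And>k. k < K \<Longrightarrow> 0 < \<alpha> k" and \<nu>: "\<And>k. k < K \<Longrightarrow> 0 \<le> \<nu> k"
    and \<eta>: "\<And>k. k < K \<Longrightarrow> 0 \<le> \<eta> k" "(\<Sum>k<K. \<eta> k) = 1"
    and d: "vdist K \<nu> \<eta> \<le> d" "K * d \<le> 1 / 2" and s: "0 < s"
  defines "B \<equiv> \<Sum>k<K. \<alpha> k + s * \<nu> k"
  shows "s / 2 \<le> B"
    and "vdist K (\<lambda>k. (\<alpha> k + s * \<nu> k) / B) \<eta>
      \<le> sqrt (real K) * (4 * (\<Sum>k<K. \<alpha> k) / s + 2 * (1 + real K) * d)"
proof -
  define a0 where "a0 = (\<Sum>k<K. \<alpha> k)"
  have "K \<noteq> 0"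
    using \<eta>(2) by (intro notI) simp
  then have a0: "0 < a0"
    unfolding a0_def using \<alpha> by (intro sum_pos) auto
  have d0: "0 \<le> d"
    using d(1) vdist_nonneg order_trans by blast
  have "s * (1 / 2) \<le> s * (\<Sum>k<K. \<nu> k)"
    using abs_sum_minus_one_le[OF \<eta>(2) d(1)] d(2) s by (intro mult_left_mono) auto
  then show sB: "s / 2 \<le> B"
    using a0 by (simp add: B_def a0_def sum.distrib sum_distrib_left)
  then have B: "0 < B"
    using s by simp
  have "\<bar>(\<alpha> k + s * \<nu> k) / B - \<eta> k\<bar> \<le> 4 * a0 / s + 2 * (1 + K) * d" if k: "k < K" for k
  proof -
    have "(\<alpha> k + s * \<nu> k) / B - \<eta> k = ((\<alpha> k + s * \<nu> k) - \<eta> k * B) / B"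
      using B by (simp add: field_simps)
    then have "\<bar>(\<alpha> k + s * \<nu> k) / B - \<eta> k\<bar> = \<bar>(\<alpha> k + s * \<nu> k) - \<eta> k * B\<bar> / B"
      using B by simp
    also have "\<dots> \<le> (2 * a0 + s * ((1 + K) * d)) / B"
      using posterior_numerator_bound[where \<alpha> = \<alpha> and \<eta> = \<eta> and \<nu> = \<nu>, OF k \<alpha> \<eta> d(1)] s B
      by (intro divide_right_mono) (auto simp: B_def a0_def)
    also have "\<dots> = 2 * a0 / B + s / B * ((1 + K) * d)"
      by (simp add: add_divide_distrib)
    also have "\<dots> \<le> 4 * a0 / s + 2 * ((1 + K) * d)"
    proof (intro add_mono mult_right_mono)
      have "2 * a0 / B \<le> 2 * a0 / (s / 2)"
        using sB s a0 by (intro frac_le) auto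
      then show "2 * a0 / B \<le> 4 * a0 / s"
        by simp
      show "s / B \<le> 2"
        using sB B by (simp add: field_simps)
    qed (use d0 in auto)
    finally show ?thesis
      by (simp add: algebra_simps)
  qed
  then show "vdist K (\<lambda>k. (\<alpha> k + s * \<nu> k) / B) \<eta>
      \<le> sqrt (real K) * (4 * (\<Sum>k<K. \<alpha> k) / s + 2 * (1 + real K) * d)"
    using a0 s d0 by (intro vdist_le_sqrt_card) (auto simp: a0_def)
qed

lemma dirichlet_posterior_tail_le:
  fixes \<alpha> \<nu> \<eta> v :: "nat \<Rightarrow> real"
  assumes K: "0 < K" and \<alpha>: "\<And>k. k < K \<Longrightarrow> 0 < \<alpha> k" and \<nu>: "\<And>k. k < K \<Longrightarrow> 0 \<le> \<nu> k"
    and \<eta>: "\<And>k. k < K \<Longrightarrow> 0 \<le> \<eta> k" "(\<Sum>k<K. \<eta> k) = 1"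
    and d: "vdist K \<nu> \<eta> \<le> d" "K * d \<le> 1 / 2" and v: "vdist K v \<eta> \<le> d"
    and s: "0 < s" and r: "0 < r"
  shows "measure (dirichlet K (\<lambda>k. \<alpha> k + s * \<nu> k)) {q \<in> space (PiM {..<K} (\<lambda>_. borel)). r < vdist K q v}
    \<le> (2 * real K / s + (sqrt K * (4 * (\<Sum>k<K. \<alpha> k) / s + 2 * (1 + real K) * d) + d)\<^sup>2) / r\<^sup>2"
proof -
  define B where "B = (\<Sum>k<K. \<alpha> k + s * \<nu> k)"
  have mean: "s / 2 \<le> B"
    "vdist K (\<lambda>k. (\<alpha> k + s * \<nu> k) / B) \<eta> \<le> sqrt K * (4 * (\<Sum>k<K. \<alpha> k) / s + 2 * (1 + real K) * d)"
    using posterior_mean_close[of K \<alpha> \<nu> \<eta> d s] \<alpha> \<nu> \<eta> d s by (simp_all add: B_def)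
  have "measure (dirichlet K (\<lambda>k. \<alpha> k + s * \<nu> k)) {q \<in> space (PiM {..<K} (\<lambda>_. borel)). r < vdist K q v}
      \<le> (K / (B + 1) + (vdist K (\<lambda>k. (\<alpha> k + s * \<nu> k) / B) v)\<^sup>2) / r\<^sup>2"
    using dirichlet_tail_bound[of K "\<lambda>k. \<alpha> k + s * \<nu> k" r v] \<alpha> \<nu> s K r
    by (simp add: B_def add_pos_nonneg)
  also have "\<dots> \<le> (2 * real K / s + (sqrt K * (4 * (\<Sum>k<K. \<alpha> k) / s + 2 * (1 + real K) * d) + d)\<^sup>2) / r\<^sup>2"
  proof (intro divide_right_mono add_mono power_mono)
    have "real K / (B + 1) \<le> K / (s / 2)"
      using mean(1) s by (intro divide_left_mono) auto
    then show "real K / (B + 1) \<le> 2 * real K / s"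
      by (simp add: ac_simps)
    show "vdist K (\<lambda>k. (\<alpha> k + s * \<nu> k) / B) v
        \<le> sqrt K * (4 * (\<Sum>k<K. \<alpha> k) / s + 2 * (1 + real K) * d) + d"
      using vdist_triangle[of K "\<lambda>k. (\<alpha> k + s * \<nu> k) / B" v \<eta>] vdist_commute[of K v \<eta>] mean(2) v
      by linarith
  qed simp_all
  finally show ?thesis .
qed

lemma dirichlet_posterior_concentrates:
  fixes \<alpha> :: "nat \<Rightarrow> real"
  assumes K: "0 < K" and \<alpha>: "\<And>k. k < K \<Longrightarrow> 0 < \<alpha> k"
    and \<gamma>: "0 < \<gamma>" and r: "0 < r" and d0: "0 < d0"
  obtains d S where "0 < d" "d \<le> d0"
    "\<And>s \<nu> \<eta> v. S \<le> s \<Longrightarrow> (\<And>k. k < K \<Longrightarrow> 0 \<le> \<nu> k) \<Longrightarrow>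
       (\<And>k. k < K \<Longrightarrow> 0 \<le> \<eta> k) \<Longrightarrow> (\<Sum>k<K. \<eta> k) = 1 \<Longrightarrow>
       vdist K \<nu> \<eta> \<le> d \<Longrightarrow> vdist K v \<eta> \<le> d \<Longrightarrow>
       measure (dirichlet K (\<lambda>k. \<alpha> k + s * \<nu> k)) {q \<in> space (PiM {..<K} (\<lambda>_. borel)). r < vdist K q v}
         \<le> \<gamma>"
proof -
  \<comment> \<open>\<open>d\<close> and \<open>S\<close> make the variance term and the squared bias in
    \<open>dirichlet_posterior_tail_le\<close> each at most \<open>\<gamma> r\<^sup>2 / 2\<close>\<close>
  define a0 where "a0 = (\<Sum>k<K. \<alpha> k)"
  define C where "C = sqrt K * (2 * (1 + real K)) + 1"
  define w where "w = r * sqrt (\<gamma> / 2)"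
  define d where "d = min d0 (min (1 / (2 * K)) (w / (2 * C)))"
  define S where "S = max (4 * K / (\<gamma> * r\<^sup>2)) (8 * sqrt K * a0 / w)"
  have a0: "0 < a0"
    unfolding a0_def using K \<alpha> by (intro sum_pos) auto
  have C: "0 < C" and w: "0 < w" and \<gamma>r: "0 < \<gamma> * r\<^sup>2"
    using \<gamma> r by (simp_all add: C_def w_def add_nonneg_pos)
  have d_le: "d \<le> d0" "d \<le> 1 / (2 * K)" "d \<le> w / (2 * C)"
    by (simp_all add: d_def)
  have "K * d \<le> K * (1 / (2 * K))" "C * d \<le> C * (w / (2 * C))"
    using C by (intro mult_left_mono d_le; simp)+
  then have d: "0 < d" "d \<le> d0" "K * d \<le> 1 / 2" "C * d \<le> w / 2"
    using K d0 C w d_le by (simp_all add: d_def)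
  have S: "0 < S" "4 * K / (\<gamma> * r\<^sup>2) \<le> S" "8 * sqrt K * a0 / w \<le> S"
    using K \<gamma>r by (simp_all add: S_def less_max_iff_disj)
  have "(2 * real K / s + (sqrt K * (4 * a0 / s + 2 * (1 + real K) * d) + d)\<^sup>2) / r\<^sup>2 \<le> \<gamma>"
    if s: "S \<le> s" for s
  proof -
    have "2 * real K / s \<le> 2 * real K / S"
      using s S by (simp add: frac_le)
    also have "\<dots> \<le> \<gamma> * r\<^sup>2 / 2"
      using S \<gamma>r by (simp add: field_simps)
    finally have variance: "2 * real K / s \<le> \<gamma> * r\<^sup>2 / 2" .
    have "sqrt K * 4 * a0 / s \<le> sqrt K * 4 * a0 / S"
      using s S a0 by (intro divide_left_mono) auto
    also have "\<dots> \<le> w / 2"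
      using S w by (simp add: field_simps)
    finally have bias: "sqrt K * 4 * a0 / s \<le> w / 2" .
    have "sqrt K * (4 * a0 / s + 2 * (1 + real K) * d) + d = sqrt K * 4 * a0 / s + C * d"
      by (simp add: C_def algebra_simps)
    also have "\<dots> \<le> w / 2 + w / 2"
      using bias d(4) by (rule add_mono)
    finally have "sqrt K * (4 * a0 / s + 2 * (1 + real K) * d) + d \<le> w"
      by simp
    then have "(sqrt K * (4 * a0 / s + 2 * (1 + real K) * d) + d)\<^sup>2 \<le> w\<^sup>2"
      using S s a0 d by (intro power_mono) auto
    also have "w\<^sup>2 = \<gamma> * r\<^sup>2 / 2"
      using \<gamma> by (simp add: w_def power_mult_distrib)
    finally have "2 * real K / s + (sqrt K * (4 * a0 / s + 2 * (1 + real K) * d) + d)\<^sup>2 \<le> \<gamma> * r\<^sup>2"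
      using variance by linarith
    then show ?thesis
      using r by (simp add: pos_divide_le_eq)
  qed
  then show ?thesis
    using d S(1) r
    by (intro that[of d S] order_trans[OF dirichlet_posterior_tail_le[OF K \<alpha>]])
      (auto simp: a0_def intro: less_le_trans)
qed

section \<open>Conditioning on a finite-valued parameter\<close>

lemma measure_Int_le_of_real_cond_exp_le:
  assumes M: "prob_space M" and sub: "subalgebra M F" and G: "G \<in> sets F" and S: "S \<in> sets M"
    and le: "AE \<omega> in M. \<omega> \<in> G \<longrightarrow> real_cond_exp M F (indicator S) \<omega> \<le> b"
  shows "measure M (G \<inter> S) \<le> b * measure M G"
proof -
  interpret prob_space M
    by (rule M)
  interpret finite_measure_subalgebra M F
    by standard (rule sub)
  have GM: "G \<in> sets M"
    using G sub by (auto simp: subalgebra_def)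
  have int: "integrable M (indicator S :: _ \<Rightarrow> real)"
    using S by (intro integrable_real_indicator) (auto simp: less_top[symmetric])
  have "measure M (G \<inter> S) = (\<integral>\<omega>. indicator G \<omega> * indicator S \<omega> \<partial>M)"
    using GM S by (simp add: indicator_inter_arith[symmetric])
  also have "\<dots> = (\<integral>\<omega>. indicator G \<omega> * real_cond_exp M F (indicator S) \<omega> \<partial>M)"
    using real_cond_exp_intA[OF int G] by (simp add: set_lebesgue_integral_def)
  also have "\<dots> \<le> (\<integral>\<omega>. indicator G \<omega> * b \<partial>M)"
  proof (rule integral_mono_AE)
    show "integrable M (\<lambda>\<omega>. indicator G \<omega> * real_cond_exp M F (indicator S) \<omega>)"
      using integrable_mult_indicator[OF GM real_cond_exp_int(1)[OF int]] by simp
    show "AE \<omega> in M. indicator G \<omega> * real_cond_exp M F (indicator S) \<omega> \<le> indicator G \<omega> * b"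
      using le by eventually_elim (simp add: indicator_def)
    show "integrable M (\<lambda>\<omega>. indicator G \<omega> * b)"
      using GM by (intro integrable_mult_left integrable_real_indicator) (auto simp: less_top[symmetric])
  qed
  also have "\<dots> = b * measure M G"
    using GM by simp
  finally show ?thesis .
qed

(* The conditional law is given only on fixed events; an event whose parameter R is
   F-measurable with finitely many values is handled cell by cell on {R = v}. *)
lemma
  assumes M: "prob_space M" and sub: "subalgebra M F" and P: "P \<in> measurable M N"
    and law: "\<And>A. A \<in> sets N \<Longrightarrow>
      AE \<omega> in M. real_cond_exp M F (indicator {\<omega>' \<in> space M. P \<omega>' \<in> A}) \<omega> = Q \<omega> A"
    and R: "\<And>v. {\<omega> \<in> space M. R \<omega> = v} \<in> sets F" and R_finite: "finite (R ` space M)"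
    and A: "\<And>v. A v \<in> sets N" and G: "G \<in> sets F"
  shows sets_conditional_finite_range: "{\<omega> \<in> G. P \<omega> \<in> A (R \<omega>)} \<in> sets M"
    and measure_conditional_finite_range_le:
      "(\<And>\<omega>. \<omega> \<in> G \<Longrightarrow> Q \<omega> (A (R \<omega>)) \<le> \<gamma>) \<Longrightarrow> 0 \<le> \<gamma> \<Longrightarrow>
        measure M {\<omega> \<in> G. P \<omega> \<in> A (R \<omega>)} \<le> \<gamma>"
proof -
  interpret prob_space M
    by (rule M)
  have F_sets: "X \<in> sets F \<Longrightarrow> X \<in> sets M" for X
    using sub by (auto simp: subalgebra_def)
  define G' where "G' v = G \<inter> {\<omega> \<in> space M. R \<omega> = v}" for v
  define S where "S v = {\<omega> \<in> space M. P \<omega> \<in> A v}" for v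
  have G'F: "G' v \<in> sets F" for v
    unfolding G'_def using G R by auto
  have G'M: "G' v \<in> sets M" and SM: "S v \<in> sets M" for v
    using F_sets[OF G'F] P A by (auto simp: S_def)
  have GM: "G \<subseteq> space M"
    using F_sets[OF G] sets.sets_into_space by blast
  have decomp: "{\<omega> \<in> G. P \<omega> \<in> A (R \<omega>)} = (\<Union>v\<in>R ` space M. G' v \<inter> S v)"
    using GM by (auto simp: G'_def S_def)
  show "{\<omega> \<in> G. P \<omega> \<in> A (R \<omega>)} \<in> sets M"
    unfolding decomp using G'M SM R_finite by (intro sets.finite_UN) auto
  assume bound: "\<And>\<omega>. \<omega> \<in> G \<Longrightarrow> Q \<omega> (A (R \<omega>)) \<le> \<gamma>" and \<gamma>: "0 \<le> \<gamma>"
  have cell: "measure M (G' v \<inter> S v) \<le> \<gamma> * measure M (G' v)" for v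
  proof (rule measure_Int_le_of_real_cond_exp_le[OF M sub G'F SM])
    show "AE \<omega> in M. \<omega> \<in> G' v \<longrightarrow> real_cond_exp M F (indicator (S v)) \<omega> \<le> \<gamma>"
      using law[OF A[of v]] by eventually_elim (auto simp: G'_def S_def dest: bound)
  qed
  have "measure M {\<omega> \<in> G. P \<omega> \<in> A (R \<omega>)} \<le> (\<Sum>v\<in>R ` space M. measure M (G' v \<inter> S v))"
    unfolding decomp using G'M SM R_finite by (intro finite_measure_subadditive_finite) auto
  also have "\<dots> \<le> (\<Sum>v\<in>R ` space M. \<gamma> * measure M (G' v))"
    by (intro sum_mono cell)
  also have "\<dots> = \<gamma> * measure M (\<Union>v\<in>R ` space M. G' v)"
    using G'M R_finite
    by (subst finite_measure_finite_Union) (auto simp: disjoint_family_on_def G'_def sum_distrib_left)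
  also have "\<dots> \<le> \<gamma>"
    using \<gamma> by (simp add: mult_left_le)
  finally show "measure M {\<omega> \<in> G. P \<omega> \<in> A (R \<omega>)} \<le> \<gamma>" .
qed

definition grid_round :: "nat \<Rightarrow> real \<Rightarrow> (nat \<Rightarrow> real) \<Rightarrow> nat \<Rightarrow> real" where
  "grid_round K h x = (\<lambda>k\<in>{..<K}. h * of_int \<lfloor>x k / h\<rfloor>)"

lemma vdist_grid_round_le:
  assumes "0 < h"
  shows "vdist K (grid_round K h x) x \<le> sqrt K * h"
proof (rule vdist_le_sqrt_card)
  fix k assume "k < K"
  have "h * of_int \<lfloor>x k / h\<rfloor> \<le> h * (x k / h)" "h * (x k / h) < h * (of_int \<lfloor>x k / h\<rfloor> + 1)"
    using assms by (intro mult_left_mono mult_strict_left_mono; simp)+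
  then show "\<bar>grid_round K h x k - x k\<bar> \<le> h"
    using assms \<open>k < K\<close> by (simp add: grid_round_def algebra_simps)
qed (use assms in simp)

lemma finite_grid_round_image:
  assumes h: "0 < h" and bounded: "\<And>x k. x \<in> X \<Longrightarrow> k < K \<Longrightarrow> \<bar>x k\<bar> \<le> b"
  shows "finite (grid_round K h ` X)"
proof (rule finite_subset)
  define N where "N = \<lceil>b / h\<rceil>"
  show "grid_round K h ` X \<subseteq> (\<lambda>g. \<lambda>k\<in>{..<K}. h * of_int (g k)) ` PiE {..<K} (\<lambda>_. {-N..N})"
  proof
    fix y assume "y \<in> grid_round K h ` X"
    then obtain x where x: "x \<in> X" and y: "y = grid_round K h x"
      by blast
    have "\<lfloor>x k / h\<rfloor> \<in> {-N..N}" if "k < K" for k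
    proof -
      have "\<bar>x k / h\<bar> \<le> b / h"
        using bounded[OF x that] h by (simp add: abs_divide divide_right_mono)
      then have "- (b / h) \<le> x k / h" "x k / h \<le> b / h"
        by linarith+
      then have "\<lfloor>- (b / h)\<rfloor> \<le> \<lfloor>x k / h\<rfloor>" "\<lfloor>x k / h\<rfloor> \<le> \<lfloor>b / h\<rfloor>"
        by (simp_all add: floor_mono)
      moreover have "\<lfloor>b / h\<rfloor> \<le> \<lceil>b / h\<rceil>"
        by (rule floor_le_ceiling)
      ultimately show ?thesis
        unfolding N_def floor_minus atLeastAtMost_iff by linarith
    qed
    then show "y \<in> (\<lambda>g. \<lambda>k\<in>{..<K}. h * of_int (g k)) ` PiE {..<K} (\<lambda>_. {-N..N})"
    proof (intro image_eqI)
      show "y = (\<lambda>k\<in>{..<K}. h * of_int ((\<lambda>k\<in>{..<K}. \<lfloor>x k / h\<rfloor>) k))"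
        unfolding y grid_round_def by (intro restrict_ext) simp
    qed (subst restrict_PiE_iff, auto)
  qed
qed (intro finite_imageI finite_PiE; simp)

lemma grid_round_eq_iff:
  "grid_round K h x = v \<longleftrightarrow> v \<in> extensional {..<K} \<and> (\<forall>k<K. h * of_int \<lfloor>x k / h\<rfloor> = v k)"
proof
  assume "grid_round K h x = v"
  then show "v \<in> extensional {..<K} \<and> (\<forall>k<K. h * of_int \<lfloor>x k / h\<rfloor> = v k)"
    unfolding grid_round_def by auto
next
  assume v: "v \<in> extensional {..<K} \<and> (\<forall>k<K. h * of_int \<lfloor>x k / h\<rfloor> = v k)"
  show "grid_round K h x = v"
  proof
    fix k
    show "grid_round K h x k = v k"
      using v by (cases "k < K") (simp_all add: grid_round_def extensional_def)
  qed
qed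

lemma sets_grid_round_eq:
  assumes "\<And>k. k < K \<Longrightarrow> (\<lambda>\<omega>. c \<omega> k) \<in> borel_measurable F"
  shows "{\<omega> \<in> space F. grid_round K h (c \<omega>) = v} \<in> sets F"
  unfolding grid_round_eq_iff using assms by measurable

lemma measure_far_from_measurable_centre_le:
  assumes M: "prob_space M" and sub: "subalgebra M F"
    and P: "P \<in> measurable M (PiM {..<K} (\<lambda>_. borel))"
    and law: "\<And>A. A \<in> sets (PiM {..<K} (\<lambda>_. borel)) \<Longrightarrow>
      AE \<omega> in M. real_cond_exp M F (indicator {\<omega>' \<in> space M. P \<omega>' \<in> A}) \<omega> = Q \<omega> A"
    and c: "\<And>k. k < K \<Longrightarrow> (\<lambda>\<omega>. c \<omega> k) \<in> borel_measurable F"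
    and c_bounded: "\<And>\<omega> k. \<omega> \<in> space M \<Longrightarrow> k < K \<Longrightarrow> \<bar>c \<omega> k\<bar> \<le> 1"
    and G: "G \<in> sets F" and d: "0 < d" and \<gamma>: "0 \<le> \<gamma>"
    and conc: "\<And>\<omega> v. \<omega> \<in> G \<Longrightarrow> vdist K v (c \<omega>) \<le> d \<Longrightarrow>
      Q \<omega> {q \<in> space (PiM {..<K} (\<lambda>_. borel)). r < vdist K q v} \<le> \<gamma>"
  shows "measure M {\<omega> \<in> G. r + d < vdist K (P \<omega>) (c \<omega>)} \<le> \<gamma>"
proof -
  interpret prob_space M
    by (rule M)
  \<comment> \<open>rounding the centre to a grid of mesh \<open>h\<close> leaves finitely many events \<open>P \<in> A v\<close>\<close>
  define h where "h = d / (sqrt K + 1)"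
  define R where "R \<omega> = grid_round K h (c \<omega>)" for \<omega>
  define A where "A v = {q \<in> space (PiM {..<K} (\<lambda>_. borel)). r < vdist K q v}" for v
  have h: "0 < h"
    using d by (simp add: h_def add_nonneg_pos)
  have R_close: "vdist K (R \<omega>) (c \<omega>) \<le> d" for \<omega>
  proof -
    have "vdist K (R \<omega>) (c \<omega>) \<le> sqrt K * h"
      unfolding R_def by (rule vdist_grid_round_le[OF h])
    also have "\<dots> = d * (sqrt K / (sqrt K + 1))"
      by (simp add: h_def)
    also have "\<dots> \<le> d * 1"
      using d by (intro mult_left_mono) (simp_all add: pos_divide_le_eq add_nonneg_pos)
    finally show ?thesis
      by simp
  qed
  have space_F: "space F = space M"
    using sub by (simp add: subalgebra_def)
  have R_sets: "{\<omega> \<in> space M. R \<omega> = v} \<in> sets F" for v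
    using sets_grid_round_eq[of K c F h v] c by (simp add: R_def space_F)
  have "finite (grid_round K h ` c ` space M)"
    using c_bounded by (intro finite_grid_round_image[OF h]) auto
  then have R_finite: "finite (R ` space M)"
    by (simp add: R_def image_image)
  have A_sets: "A v \<in> sets (PiM {..<K} (\<lambda>_. borel))" for v
    unfolding A_def vdist_def by measurable
  have GM: "G \<subseteq> space M"
    using G sub sets.sets_into_space by (fastforce simp: subalgebra_def)
  have "{\<omega> \<in> G. r + d < vdist K (P \<omega>) (c \<omega>)} \<subseteq> {\<omega> \<in> G. P \<omega> \<in> A (R \<omega>)}"
  proof safe
    fix \<omega> assume \<omega>: "\<omega> \<in> G" "r + d < vdist K (P \<omega>) (c \<omega>)"
    have "vdist K (P \<omega>) (c \<omega>) \<le> vdist K (P \<omega>) (R \<omega>) + d"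
      using vdist_triangle[of K "P \<omega>" "c \<omega>" "R \<omega>"] R_close[of \<omega>] by linarith
    moreover have "P \<omega> \<in> space (PiM {..<K} (\<lambda>_. borel))"
      using P \<omega>(1) GM by (auto intro: measurable_space)
    ultimately show "P \<omega> \<in> A (R \<omega>)"
      using \<omega>(2) by (simp add: A_def)
  qed
  then have "measure M {\<omega> \<in> G. r + d < vdist K (P \<omega>) (c \<omega>)} \<le> measure M {\<omega> \<in> G. P \<omega> \<in> A (R \<omega>)}"
    using sets_conditional_finite_range[OF M sub P law R_sets R_finite A_sets G]
    by (intro finite_measure_mono) auto
  also have "\<dots> \<le> \<gamma>"
  proof (rule measure_conditional_finite_range_le[OF M sub P law R_sets R_finite A_sets G _ \<gamma>])
    fix \<omega> assume "\<omega> \<in> G"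
    then show "Q \<omega> (A (R \<omega>)) \<le> \<gamma>"
      unfolding A_def by (rule conc[OF _ R_close])
  qed
  finally show ?thesis .
qed

section \<open>Posterior consistency\<close>

lemma AE_density_pos:
  assumes "distributed M lborel Z (\<lambda>x. ennreal (f x))"
  shows "AE \<omega> in M. 0 < f (Z \<omega>)"
proof -
  have [measurable]: "(\<lambda>x. ennreal (f x)) \<in> borel_measurable lborel"
    using distributed_borel_measurable[OF assms] .
  have "{\<omega> \<in> space M. \<not> 0 < f (Z \<omega>)} = Z -` {x. ennreal (f x) = 0} \<inter> space M"
    by (auto simp: ennreal_eq_0_iff)
  moreover have "emeasure M (Z -` {x. ennreal (f x) = 0} \<inter> space M) = 0"
  proof -
    have "(\<lambda>x. ennreal (f x) * indicator {x. ennreal (f x) = 0} x) = (\<lambda>x. 0)"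
      by (auto simp: indicator_def fun_eq_iff)
    then show ?thesis
      by (subst distributed_emeasure[OF assms]) auto
  qed
  moreover have "Z -` {x. ennreal (f x) = 0} \<inter> space M \<in> sets M"
    using distributed_measurable[OF assms] by measurable
  ultimately show ?thesis
    by (subst AE_iff_measurable) auto
qed

lemma measure_le_small_of_AE_pos:
  fixes g :: "'a \<Rightarrow> real"
  assumes M: "prob_space M" and g: "g \<in> borel_measurable M" and pos: "AE \<omega> in M. 0 < g \<omega>"
    and \<gamma>: "0 < \<gamma>"
  obtains \<tau> where "0 < \<tau>" "measure M {\<omega> \<in> space M. g \<omega> \<le> \<tau>} < \<gamma>"
proof -
  interpret prob_space M
    by (rule M)
  define D where "D j = {\<omega> \<in> space M. g \<omega> \<le> 1 / real (Suc j)}" for j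
  have "decseq D"
    unfolding decseq_def D_def by (auto intro: order_trans[OF _ divide_left_mono])
  moreover have "range D \<subseteq> sets M"
    using g by (auto simp: D_def)
  moreover have "(\<Inter>j. D j) = {\<omega> \<in> space M. g \<omega> \<le> 0}"
  proof (intro equalityI subsetI)
    fix \<omega> assume \<omega>: "\<omega> \<in> (\<Inter>j. D j)"
    have "\<not> 0 < g \<omega>"
    proof
      assume "0 < g \<omega>"
      then obtain j where "inverse (real (Suc j)) < g \<omega>"
        using reals_Archimedean by blast
      moreover have "g \<omega> \<le> 1 / real (Suc j)"
        using \<omega> by (simp add: D_def)
      ultimately show False
        by (simp add: inverse_eq_divide)
    qed
    with \<omega> show "\<omega> \<in> {\<omega> \<in> space M. g \<omega> \<le> 0}"
      by (auto simp: D_def)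
  qed (auto simp: D_def order_trans)
  moreover have "measure M {\<omega> \<in> space M. g \<omega> \<le> 0} = 0"
    using pos g by (subst measure_eq_0_null_sets) (auto simp: AE_iff_null not_less)
  ultimately have "(\<lambda>j. measure M (D j)) \<longlonglongrightarrow> 0"
    using finite_Lim_measure_decseq by metis
  from order_tendstoD(2)[OF this \<gamma>] obtain j where "measure M (D j) < \<gamma>"
    by (auto simp: eventually_sequentially)
  then show ?thesis
    by (intro that[of "1 / real (Suc j)"]) (auto simp: D_def)
qed

lemma tendsto_measure_scaled_less:
  fixes D :: "nat \<Rightarrow> 'a \<Rightarrow> real" and g :: "'a \<Rightarrow> real"
  assumes M: "prob_space M" and g: "g \<in> borel_measurable M" and D: "\<And>n. D n \<in> borel_measurable M"
    and pos: "AE \<omega> in M. 0 < g \<omega>"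
    and cons: "\<And>\<epsilon>. 0 < \<epsilon> \<Longrightarrow> (\<lambda>n. measure M {\<omega> \<in> space M. \<epsilon> < \<bar>D n \<omega> - g \<omega>\<bar>}) \<longlonglongrightarrow> 0"
  shows "(\<lambda>n. measure M {\<omega> \<in> space M. real n * D n \<omega> < S}) \<longlonglongrightarrow> 0"
proof (rule order_tendstoI)
  interpret prob_space M
    by (rule M)
  note [measurable] = g D
  fix a :: real
  show "a < 0 \<Longrightarrow> \<forall>\<^sub>F n in sequentially. a < measure M {\<omega> \<in> space M. real n * D n \<omega> < S}"
    by (simp add: less_le_trans[OF _ measure_nonneg])
  assume a: "0 < a"
  then obtain \<tau> where \<tau>: "0 < \<tau>" "measure M {\<omega> \<in> space M. g \<omega> \<le> \<tau>} < a / 2"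
    using measure_le_small_of_AE_pos[OF M g pos, of "a / 2"] by auto
  obtain N where N: "S / (\<tau> / 2) \<le> real N"
    using real_arch_simple by blast
  have "\<forall>\<^sub>F n in sequentially. measure M {\<omega> \<in> space M. \<tau> / 2 < \<bar>D n \<omega> - g \<omega>\<bar>} < a / 2"
    using a \<tau> by (intro order_tendstoD(2)[OF cons]) auto
  moreover have "\<forall>\<^sub>F n in sequentially. N \<le> n"
    by (rule eventually_ge_at_top)
  ultimately show "\<forall>\<^sub>F n in sequentially. measure M {\<omega> \<in> space M. real n * D n \<omega> < S} < a"
  proof eventually_elim
    case (elim n)
    have "S \<le> real N * (\<tau> / 2)"
      using N \<tau>(1) by (simp add: field_simps)
    also have "\<dots> \<le> real n * (\<tau> / 2)"
      using elim(2) \<tau>(1) by (intro mult_right_mono) auto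
    finally have "S \<le> real n * (\<tau> / 2)" .
    have "{\<omega> \<in> space M. real n * D n \<omega> < S}
        \<subseteq> {\<omega> \<in> space M. g \<omega> \<le> \<tau>} \<union> {\<omega> \<in> space M. \<tau> / 2 < \<bar>D n \<omega> - g \<omega>\<bar>}"
    proof (rule subsetI, rule ccontr)
      fix \<omega> assume \<omega>: "\<omega> \<in> {\<omega> \<in> space M. real n * D n \<omega> < S}"
        and "\<omega> \<notin> {\<omega> \<in> space M. g \<omega> \<le> \<tau>} \<union> {\<omega> \<in> space M. \<tau> / 2 < \<bar>D n \<omega> - g \<omega>\<bar>}"
      with \<omega> have "\<tau> < g \<omega>" "\<bar>D n \<omega> - g \<omega>\<bar> \<le> \<tau> / 2"
        by auto
      then have "\<tau> / 2 \<le> D n \<omega>"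
        by arith
      then have "real n * (\<tau> / 2) \<le> real n * D n \<omega>"
        by (intro mult_left_mono) auto
      with \<omega> \<open>S \<le> real n * (\<tau> / 2)\<close> show False
        by simp
    qed
    then have "measure M {\<omega> \<in> space M. real n * D n \<omega> < S}
        \<le> measure M ({\<omega> \<in> space M. g \<omega> \<le> \<tau>} \<union> {\<omega> \<in> space M. \<tau> / 2 < \<bar>D n \<omega> - g \<omega>\<bar>})"
      by (intro finite_measure_mono) measurable
    also have "\<dots> \<le> measure M {\<omega> \<in> space M. g \<omega> \<le> \<tau>} + measure M {\<omega> \<in> space M. \<tau> / 2 < \<bar>D n \<omega> - g \<omega>\<bar>}"
      by (intro measure_Un_le) measurable
    finally show ?case
      using \<tau>(2) elim(1) by linarith
  qed
qed

locale dirichlet_posterior =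
  fixes M :: "'a measure" and F :: "nat \<Rightarrow> 'a measure" and K :: nat and \<alpha> :: "nat \<Rightarrow> real"
    and P :: "nat \<Rightarrow> 'a \<Rightarrow> nat \<Rightarrow> real" and s :: "nat \<Rightarrow> 'a \<Rightarrow> real"
    and \<nu> :: "nat \<Rightarrow> 'a \<Rightarrow> nat \<Rightarrow> real" and c :: "'a \<Rightarrow> nat \<Rightarrow> real" and n0 :: nat
  assumes M: "prob_space M" and K: "0 < K" and \<alpha>: "\<And>k. k < K \<Longrightarrow> 0 < \<alpha> k"
    and sub: "\<And>n. n0 \<le> n \<Longrightarrow> subalgebra M (F n)"
    and P: "\<And>n. P n \<in> measurable M (PiM {..<K} (\<lambda>_. borel))"
    and s: "\<And>n. n0 \<le> n \<Longrightarrow> s n \<in> borel_measurable (F n)"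
    and \<nu>: "\<And>n k. n0 \<le> n \<Longrightarrow> (\<lambda>\<omega>. \<nu> n \<omega> k) \<in> borel_measurable (F n)"
    and c: "\<And>n k. n0 \<le> n \<Longrightarrow> (\<lambda>\<omega>. c \<omega> k) \<in> borel_measurable (F n)"
    and \<nu>_nonneg: "\<And>n \<omega> k. 0 \<le> \<nu> n \<omega> k"
    and c_nonneg: "\<And>\<omega> k. 0 \<le> c \<omega> k" and c_sum: "\<And>\<omega>. (\<Sum>k<K. c \<omega> k) = 1"
    and law: "\<And>n A. n0 \<le> n \<Longrightarrow> A \<in> sets (PiM {..<K} (\<lambda>_. borel)) \<Longrightarrow>
      AE \<omega> in M. real_cond_exp M (F n) (indicator {\<omega>' \<in> space M. P n \<omega>' \<in> A}) \<omega>
        = measure (dirichlet K (\<lambda>k. \<alpha> k + s n \<omega> * \<nu> n \<omega> k)) A"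
begin

lemma c_le_1: "k < K \<Longrightarrow> c \<omega> k \<le> 1"
  using member_le_sum[of k "{..<K}" "c \<omega>"] c_nonneg c_sum by simp

lemma borel_measurable_M:
  assumes "n0 \<le> n"
  shows "s n \<in> borel_measurable M" "(\<lambda>\<omega>. \<nu> n \<omega> k) \<in> borel_measurable M" "(\<lambda>\<omega>. c \<omega> k) \<in> borel_measurable M"
  using measurable_from_subalg[OF sub] s \<nu> c assms by blast+

lemma measure_posterior_far_le:
  assumes \<epsilon>: "0 < \<epsilon>" and \<gamma>: "0 < \<gamma>"
  obtains d S where "0 < d" "\<And>n. n0 \<le> n \<Longrightarrow>
    measure M {\<omega> \<in> space M. \<epsilon> < vdist K (P n \<omega>) (c \<omega>)}
      \<le> measure M {\<omega> \<in> space M. s n \<omega> < S} + measure M {\<omega> \<in> space M. d < vdist K (\<nu> n \<omega>) (c \<omega>)} + \<gamma>"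
proof -
  interpret prob_space M
    by (rule M)
  have \<epsilon>2: "0 < \<epsilon> / 2"
    using \<epsilon> by simp
  obtain d S where d: "0 < d" "d \<le> \<epsilon> / 2" and conc:
    "\<And>s \<nu> \<eta> v. S \<le> s \<Longrightarrow> (\<And>k. k < K \<Longrightarrow> 0 \<le> \<nu> k) \<Longrightarrow>
       (\<And>k. k < K \<Longrightarrow> 0 \<le> \<eta> k) \<Longrightarrow> (\<Sum>k<K. \<eta> k) = 1 \<Longrightarrow>
       vdist K \<nu> \<eta> \<le> d \<Longrightarrow> vdist K v \<eta> \<le> d \<Longrightarrow>
       measure (dirichlet K (\<lambda>k. \<alpha> k + s * \<nu> k)) {q \<in> space (PiM {..<K} (\<lambda>_. borel)). \<epsilon> / 2 < vdist K q v} \<le> \<gamma>"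
    using dirichlet_posterior_concentrates[where \<alpha> = \<alpha>, OF K \<alpha> \<gamma> \<epsilon>2 \<epsilon>2] by blast
  have "measure M {\<omega> \<in> space M. \<epsilon> < vdist K (P n \<omega>) (c \<omega>)}
      \<le> measure M {\<omega> \<in> space M. s n \<omega> < S} + measure M {\<omega> \<in> space M. d < vdist K (\<nu> n \<omega>) (c \<omega>)} + \<gamma>"
    if n: "n0 \<le> n" for n
  proof -
    note [measurable] = P s[OF n] \<nu>[OF n] c[OF n] borel_measurable_M[OF n]
    define G where "G = {\<omega> \<in> space M. S \<le> s n \<omega> \<and> vdist K (\<nu> n \<omega>) (c \<omega>) \<le> d}"
    have space_F: "space (F n) = space M"
      using sub[OF n] by (simp add: subalgebra_def)
    have G: "G \<in> sets (F n)"
      unfolding G_def vdist_def space_F[symmetric] by measurable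
    have far_G: "measure M {\<omega> \<in> G. \<epsilon> / 2 + d < vdist K (P n \<omega>) (c \<omega>)} \<le> \<gamma>"
    proof (rule measure_far_from_measurable_centre_le
        [OF M sub[OF n] P law[OF n] c[OF n] _ G d(1) less_imp_le[OF \<gamma>]])
      show "\<bar>c \<omega> k\<bar> \<le> 1" if "k < K" for \<omega> k
        using c_nonneg c_le_1[OF that] by simp
      show "measure (dirichlet K (\<lambda>k. \<alpha> k + s n \<omega> * \<nu> n \<omega> k))
          {q \<in> space (PiM {..<K} (\<lambda>_. borel)). \<epsilon> / 2 < vdist K q v} \<le> \<gamma>"
        if "\<omega> \<in> G" "vdist K v (c \<omega>) \<le> d" for \<omega> v
        using that by (intro conc) (auto simp: G_def \<nu>_nonneg c_nonneg c_sum)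
    qed
    let ?S1 = "{\<omega> \<in> space M. s n \<omega> < S}"
    let ?S2 = "{\<omega> \<in> space M. d < vdist K (\<nu> n \<omega>) (c \<omega>)}"
    let ?S3 = "{\<omega> \<in> G. \<epsilon> / 2 + d < vdist K (P n \<omega>) (c \<omega>)}"
    have [measurable]: "G \<in> sets M"
      using G sub[OF n] by (auto simp: subalgebra_def)
    have "{\<omega> \<in> space M. \<epsilon> < vdist K (P n \<omega>) (c \<omega>)} \<subseteq> ?S1 \<union> ?S2 \<union> ?S3"
      using d(2) by (auto simp: G_def)
    then have "measure M {\<omega> \<in> space M. \<epsilon> < vdist K (P n \<omega>) (c \<omega>)} \<le> measure M (?S1 \<union> ?S2 \<union> ?S3)"
      unfolding vdist_def by (rule finite_measure_mono) measurable
    also have "\<dots> \<le> measure M ?S1 + measure M ?S2 + measure M ?S3"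
      unfolding vdist_def
      by (intro order_trans[OF measure_Un_le] add_right_mono measure_Un_le) measurable
    finally show ?thesis
      using far_G by linarith
  qed
  with d(1) show ?thesis
    by (rule that)
qed

lemma posterior_consistent:
  assumes s_infinity: "\<And>S. (\<lambda>n. measure M {\<omega> \<in> space M. s n \<omega> < S}) \<longlonglongrightarrow> 0"
    and \<nu>_consistent: "\<And>\<epsilon>. 0 < \<epsilon> \<Longrightarrow> (\<lambda>n. measure M {\<omega> \<in> space M. \<epsilon> < vdist K (\<nu> n \<omega>) (c \<omega>)}) \<longlonglongrightarrow> 0"
    and \<epsilon>: "0 < \<epsilon>"
  shows "(\<lambda>n. measure M {\<omega> \<in> space M. \<epsilon> < vdist K (P n \<omega>) (c \<omega>)}) \<longlonglongrightarrow> 0"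
proof (rule order_tendstoI)
  fix a :: real
  show "a < 0 \<Longrightarrow> \<forall>\<^sub>F n in sequentially. a < measure M {\<omega> \<in> space M. \<epsilon> < vdist K (P n \<omega>) (c \<omega>)}"
    by (simp add: less_le_trans[OF _ measure_nonneg])
  assume "0 < a"
  then have "0 < a / 3"
    by simp
  then obtain d S where d: "0 < d" and far: "\<And>n. n0 \<le> n \<Longrightarrow>
    measure M {\<omega> \<in> space M. \<epsilon> < vdist K (P n \<omega>) (c \<omega>)}
      \<le> measure M {\<omega> \<in> space M. s n \<omega> < S} + measure M {\<omega> \<in> space M. d < vdist K (\<nu> n \<omega>) (c \<omega>)} + a / 3"
    by (rule measure_posterior_far_le[OF \<epsilon>]) blast
  have "\<forall>\<^sub>F n in sequentially. measure M {\<omega> \<in> space M. s n \<omega> < S} < a / 3"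
    using \<open>0 < a\<close> by (intro order_tendstoD(2)[OF s_infinity]) auto
  moreover have "\<forall>\<^sub>F n in sequentially. measure M {\<omega> \<in> space M. d < vdist K (\<nu> n \<omega>) (c \<omega>)} < a / 3"
    using \<open>0 < a\<close> by (intro order_tendstoD(2)[OF \<nu>_consistent[OF d]]) auto
  moreover have "\<forall>\<^sub>F n in sequentially. n0 \<le> n"
    by (rule eventually_ge_at_top)
  ultimately show "\<forall>\<^sub>F n in sequentially. measure M {\<omega> \<in> space M. \<epsilon> < vdist K (P n \<omega>) (c \<omega>)} < a"
    by eventually_elim (use far in fastforce)
qed

end

lemma borel_measurable_apply:
  assumes "(\<lambda>(\<omega>, x). g \<omega> x) \<in> borel_measurable (F \<Otimes>\<^sub>M N)" and "(\<lambda>\<omega>. \<omega>) \<in> measurable M F"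
    and "Z \<in> measurable M N"
  shows "(\<lambda>\<omega>. g \<omega> (Z \<omega>)) \<in> borel_measurable M"
  using measurable_compose[OF measurable_Pair[OF assms(2,3)] assms(1)] by simp

lemma borel_measurable_distributed_density:
  assumes "distributed M lborel Z (\<lambda>x. ennreal (f x))" and "\<And>x. 0 \<le> f x"
  shows "f \<in> borel_measurable borel"
proof -
  have "(\<lambda>x. enn2real (ennreal (f x))) \<in> borel_measurable borel"
    using distributed_borel_measurable[OF assms(1)] by measurable
  then show ?thesis
    using assms(2) by simp
qed

lemma
  fixes X :: "nat \<Rightarrow> 'a \<Rightarrow> 'x::euclidean_space" and Y :: "nat \<Rightarrow> 'a \<Rightarrow> nat"
  assumes X: "\<And>j. X j \<in> borel_measurable M" and Y: "\<And>j. Y j \<in> measurable M (count_space UNIV)"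
  shows subalgebra_data_sigma: "subalgebra M (data_sigma M X Y n)"
    and measurable_data_sigma_X: "i < n \<Longrightarrow> X i \<in> borel_measurable (data_sigma M X Y n)"
proof -
  let ?N = "PiM {..<n} (\<lambda>_. (borel :: 'x measure) \<Otimes>\<^sub>M count_space UNIV)"
  let ?T = "\<lambda>\<omega>. \<lambda>j\<in>{..<n}. (X j \<omega>, Y j \<omega>)"
  have T: "?T \<in> measurable M ?N"
    by (intro measurable_restrict measurable_Pair X Y)
  then have T_space: "?T \<in> space M \<rightarrow> space ?N"
    by (rule measurable_space[THEN funcsetI])
  show "subalgebra M (data_sigma M X Y n)"
    unfolding subalgebra_def data_sigma_def
  proof
    show "sets (vimage_algebra (space M) ?T ?N) \<subseteq> sets M"
      unfolding sets_vimage_algebra2[OF T_space] using T by (auto intro: measurable_sets)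
  qed simp
  assume i: "i < n"
  have "?T \<in> measurable (data_sigma M X Y n) ?N"
    unfolding data_sigma_def by (rule measurable_vimage_algebra1[OF T_space])
  moreover have "(\<lambda>x. x i) \<in> measurable ?N (borel \<Otimes>\<^sub>M count_space UNIV)"
    using measurable_component_singleton[of i "{..<n}" "\<lambda>_. borel \<Otimes>\<^sub>M count_space UNIV"] i by simp
  then have "(\<lambda>x. fst (x i)) \<in> borel_measurable ?N"
    by (rule measurable_compose[OF _ measurable_fst''[OF measurable_ident_sets[OF refl]]])
  ultimately have "(\<lambda>\<omega>. fst (?T \<omega> i)) \<in> borel_measurable (data_sigma M X Y n)"
    by (rule measurable_compose)
  then show "X i \<in> borel_measurable (data_sigma M X Y n)"
    using i by simp
qed

theorem theorem3p2:
  fixes M :: "'a measure"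
    and X :: "nat \<Rightarrow> 'a \<Rightarrow> 'x::euclidean_space"
    and Y :: "nat \<Rightarrow> 'a \<Rightarrow> nat"
    and K :: nat
    and f :: "'x \<Rightarrow> real"
    and \<eta> :: "'x \<Rightarrow> nat \<Rightarrow> real"
    and \<alpha> :: "nat \<Rightarrow> real"
    and DE :: "nat \<Rightarrow> 'a \<Rightarrow> 'x \<Rightarrow> real"
    and NN :: "nat \<Rightarrow> 'a \<Rightarrow> 'x \<Rightarrow> nat \<Rightarrow> real"
    and p :: "nat \<Rightarrow> 'a \<Rightarrow> nat \<Rightarrow> real"
    and i :: nat
  assumes M: "prob_space M"
    and K: "1 \<le> K"
    \<comment> \<open>the sample: i.i.d. pairs (X_j, Y_j) with joint law P*_{Y|X} P*_X\<close>
    and X_meas: "\<And>j. X j \<in> borel_measurable M"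
    and Y_meas: "\<And>j. Y j \<in> measurable M (count_space UNIV)"
    and Y_range: "\<And>j \<omega>. \<omega> \<in> space M \<Longrightarrow> Y j \<omega> < K"
    and indep: "prob_space.indep_vars M (\<lambda>_. borel \<Otimes>\<^sub>M count_space UNIV)
                  (\<lambda>j \<omega>. (X j \<omega>, Y j \<omega>)) UNIV"
    and f_nonneg: "\<And>x. 0 \<le> f x"
    and X_density: "\<And>j. distributed M lborel (X j) (\<lambda>x. ennreal (f x))"
    and \<eta>_meas: "\<And>k. (\<lambda>x. \<eta> x k) \<in> borel_measurable lborel"
    and \<eta>_nonneg: "\<And>x k. 0 \<le> \<eta> x k"
    and \<eta>_sum: "\<And>x. (\<Sum>k<K. \<eta> x k) = 1"
    and joint: "\<And>j A k. A \<in> sets lborel \<Longrightarrow> k < K \<Longrightarrow>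
                  measure M {\<omega> \<in> space M. X j \<omega> \<in> A \<and> Y j \<omega> = k}
                  = (\<integral>x. indicator A x * \<eta> x k * f x \<partial>lborel)"
    \<comment> \<open>prior concentration alpha with positive entries\<close>
    and \<alpha>_pos: "\<And>k. k < K \<Longrightarrow> 0 < \<alpha> k"
    \<comment> \<open>estimators fitted on the data, with nonnegative outputs\<close>
    and DE_meas: "\<And>n. (\<lambda>(\<omega>, x). DE n \<omega> x) \<in> borel_measurable (data_sigma M X Y n \<Otimes>\<^sub>M borel)"
    and NN_meas: "\<And>n k. (\<lambda>(\<omega>, x). NN n \<omega> x k) \<in> borel_measurable (data_sigma M X Y n \<Otimes>\<^sub>M borel)"
    and DE_nonneg: "\<And>n \<omega> x. 0 \<le> DE n \<omega> x"
    and NN_nonneg: "\<And>n \<omega> x k. 0 \<le> NN n \<omega> x k"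
    \<comment> \<open>consistency of the estimators at X_i (convergence in probability)\<close>
    and DE_cons: "\<And>\<epsilon>. 0 < \<epsilon> \<Longrightarrow>
        (\<lambda>n. measure M {\<omega> \<in> space M. \<epsilon> < \<bar>DE n \<omega> (X i \<omega>) - f (X i \<omega>)\<bar>}) \<longlonglongrightarrow> 0"
    and NN_cons: "\<And>\<epsilon>. 0 < \<epsilon> \<Longrightarrow>
        (\<lambda>n. measure M {\<omega> \<in> space M. \<epsilon> < vdist K (NN n \<omega> (X i \<omega>)) (\<eta> (X i \<omega>))}) \<longlonglongrightarrow> 0"
    \<comment> \<open>p_n given X_{1:n}, Y_{1:n} is distributed as Dir(alpha + n DE(X_i) NN(X_i)), n > i\<close>
    and p_meas: "\<And>n. p n \<in> measurable M (PiM {..<K} (\<lambda>_. borel))"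
    and p_cond: "\<And>n A. i < n \<Longrightarrow> A \<in> sets (PiM {..<K} (\<lambda>_. borel)) \<Longrightarrow>
        AE \<omega> in M. real_cond_exp M (data_sigma M X Y n)
                       (indicator {\<omega>' \<in> space M. p n \<omega>' \<in> A}) \<omega>
                   = measure (dirichlet K (\<lambda>k. \<alpha> k + real n * DE n \<omega> (X i \<omega>) * NN n \<omega> (X i \<omega>) k)) A"
  shows "\<And>\<epsilon>. 0 < \<epsilon> \<Longrightarrow>
        (\<lambda>n. measure M {\<omega> \<in> space M. \<epsilon> < vdist K (p n \<omega>) (\<eta> (X i \<omega>))}) \<longlonglongrightarrow> 0"
proof -
  interpret prob_space M
    by (rule M)
  have data_sub: "subalgebra M (data_sigma M X Y n)" for n
    by (rule subalgebra_data_sigma[OF X_meas Y_meas])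
  interpret dirichlet_posterior M "data_sigma M X Y" K \<alpha> p "\<lambda>n \<omega>. real n * DE n \<omega> (X i \<omega>)"
    "\<lambda>n \<omega>. NN n \<omega> (X i \<omega>)" "\<lambda>\<omega>. \<eta> (X i \<omega>)" "Suc i"
  proof unfold_locales
    show "0 < K"
      using K by simp
    show "AE \<omega> in M. real_cond_exp M (data_sigma M X Y n) (indicator {\<omega>' \<in> space M. p n \<omega>' \<in> A}) \<omega>
        = measure (dirichlet K (\<lambda>k. \<alpha> k + real n * DE n \<omega> (X i \<omega>) * NN n \<omega> (X i \<omega>) k)) A"
      if "Suc i \<le> n" "A \<in> sets (PiM {..<K} (\<lambda>_. borel))" for n A
      using p_cond that by simp
    fix n k assume "Suc i \<le> n"
    then have X_i: "X i \<in> borel_measurable (data_sigma M X Y n)"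
      by (intro measurable_data_sigma_X[OF X_meas Y_meas]) simp
    show "(\<lambda>\<omega>. real n * DE n \<omega> (X i \<omega>)) \<in> borel_measurable (data_sigma M X Y n)"
      using borel_measurable_apply[OF DE_meas measurable_ident_sets[OF refl] X_i] by simp
    show "(\<lambda>\<omega>. NN n \<omega> (X i \<omega>) k) \<in> borel_measurable (data_sigma M X Y n)"
      using borel_measurable_apply[OF NN_meas measurable_ident_sets[OF refl] X_i] .
    show "(\<lambda>\<omega>. \<eta> (X i \<omega>) k) \<in> borel_measurable (data_sigma M X Y n)"
      using \<eta>_meas X_i by simp
  qed (rule M \<alpha>_pos data_sub p_meas NN_nonneg \<eta>_nonneg \<eta>_sum; assumption?)+
  have "(\<lambda>\<omega>. f (X i \<omega>)) \<in> borel_measurable M"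
    using borel_measurable_distributed_density[OF X_density f_nonneg] X_meas by measurable
  then have DE_infinity: "(\<lambda>n. measure M {\<omega> \<in> space M. real n * DE n \<omega> (X i \<omega>) < S}) \<longlonglongrightarrow> 0" for S
    by (rule tendsto_measure_scaled_less[where D = "\<lambda>n \<omega>. DE n \<omega> (X i \<omega>)",
          OF M _ _ AE_density_pos[OF X_density] DE_cons])
      (rule borel_measurable_apply
        [OF DE_meas measurable_from_subalg[OF data_sub measurable_ident_sets[OF refl]] X_meas])
  show "\<And>\<epsilon>. 0 < \<epsilon> \<Longrightarrow> (\<lambda>n. measure M {\<omega> \<in> space M. \<epsilon> < vdist K (p n \<omega>) (\<eta> (X i \<omega>))}) \<longlonglongrightarrow> 0"
    by (rule posterior_consistent[OF DE_infinity NN_cons])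
qed

end
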